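(* Let $n\ge1$ be an integer, $I,\Lambda$ non-empty sets and $P$ a $\Lambda\times I$ matrix with entries in $\mathbb{Z}_{n}\cup\{\mathbf{0}\}$. Let $A$ be a finite alphabet. Every language $L\subseteq A^{+}$ recognised by the Rees zero-matrix semigroup $M^{0}[\mathbb{Z}_{n};I,\Lambda;P]$ has generalised star-height at most $1$.
   Context: $\mathbb{Z}_n$ is the cyclic group of order $n$ written additively. For a group $G$, non-empty sets $I,\Lambda$ and a $\Lambda\times I$ matrix $P=(p_{\lambda i})$ with entries in $G\cup\{\mathbf{0}\}$ ($\mathbf{0}$ a new symbol), the Rees zero-matrix semigroup $M^{0}[G;I,\Lambda;P]$ is $(I\times G\times\Lambda)\cup\{\mathbf{0}\}$ with $(i,g,\lambda)(j,h,\mu)=(i,g\,p_{\lambda j}\,h,\mu)$ if $p_{\lambda j}\ne\mathbf{0}$, $=\mathbf{0}$ if $p_{\lambda j}=\mathbf{0}$, and $x\mathbf{0}=\mathbf{0}x=\mathbf{0}$. A language $L\subseteq A^{+}$ is recognised by a semigroup $T$ if there is a semigroup morphism $\psi:A^{+}\to T$ and a subset $X\subseteq T$ with $L=X\psi^{-1}$. Generalised regular expressions over $A$: $\emptyset$, $\varepsilon$ and each letter are expressions; if $E,F$ are expressions so are $E\cup F$, $EF$, $E^{\ast}$, $E^{c}$ (complement in $A^{\ast}$). Star-height: $h(\emptyset)=h(\varepsilon)=h(a)=0$, $h(E\cup F)=h(EF)=\max\{h(E),h(F)\}$, $h(E^{\ast})=h(E)+1$, $h(E^{c})=h(E)$;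 the star-height of a language is the minimum of $h(E)$ over expressions $E$ representing it. *)

theory Defs
  imports Main
begin

text \<open>Z_n is represented by {0..<n} with addition modulo n. The zero element
 of the Rees zero-matrix semigroup is None; (i,g,lambda) is Some (i,g,lambda).
 The sandwich matrix P is a function P lambda i, with None playing the role of the
 adjoined zero symbol.\<close>

type_synonym ('i,'l) rees0 = "('i \<times> nat \<times> 'l) option"

definition rees0_carrier :: "nat \<Rightarrow> 'i set \<Rightarrow> 'l set \<Rightarrow> ('i,'l) rees0 set" where
  "rees0_carrier n I \<Lambda> = {None} \<union> {Some (i, g, l) | i g l. i \<in> I \<and> g < n \<and> l \<in> \<Lambda>}"

definition rees0_mult :: "nat \<Rightarrow> ('l \<Rightarrow> 'i \<Rightarrow> nat option) \<Rightarrow> ('i,'l) rees0 \<Rightarrow> ('i,'l) rees0 \<Rightarrow> ('i,'l) rees0" where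
  "rees0_mult n P x y =
     (case x of None \<Rightarrow> None
      | Some (i, g, l) \<Rightarrow>
        (case y of None \<Rightarrow> None
         | Some (j, h, m) \<Rightarrow>
           (case P l j of None \<Rightarrow> None
            | Some p \<Rightarrow> Some (i, (g + p + h) mod n, m))))"

definition valid_sandwich :: "nat \<Rightarrow> 'i set \<Rightarrow> 'l set \<Rightarrow> ('l \<Rightarrow> 'i \<Rightarrow> nat option) \<Rightarrow> bool" where
  "valid_sandwich n I \<Lambda> P = (\<forall>l\<in>\<Lambda>. \<forall>i\<in>I. \<forall>p. P l i = Some p \<longrightarrow> p < n)"

definition plus_words :: "'a set \<Rightarrow> 'a list set" where
  "plus_words A = lists A - {[]}"

definition recognised_by :: "'a set \<Rightarrow> 's set \<Rightarrow> ('s \<Rightarrow> 's \<Rightarrow> 's) \<Rightarrow> 'a list set \<Rightarrow> bool" where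
  "recognised_by A S mult L =
     (\<exists>\<psi> X. (\<forall>w\<in>plus_words A. \<psi> w \<in> S)
          \<and> (\<forall>u\<in>plus_words A. \<forall>v\<in>plus_words A. \<psi> (u @ v) = mult (\<psi> u) (\<psi> v))
          \<and> X \<subseteq> S
          \<and> L = {w \<in> plus_words A. \<psi> w \<in> X})"

datatype 'a gre = GEmpty | GEps | GLet 'a | GUnion "'a gre" "'a gre"
  | GConc "'a gre" "'a gre" | GStar "'a gre" | GCompl "'a gre"

inductive_set kstar :: "'a list set \<Rightarrow> 'a list set" for L where
  kstar_nil: "[] \<in> kstar L"
| kstar_app: "u \<in> L \<Longrightarrow> v \<in> kstar L \<Longrightarrow> u @ v \<in> kstar L"

fun gre_over :: "'a set \<Rightarrow> 'a gre \<Rightarrow> bool" where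
  "gre_over A GEmpty = True"
| "gre_over A GEps = True"
| "gre_over A (GLet a) = (a \<in> A)"
| "gre_over A (GUnion E F) = (gre_over A E \<and> gre_over A F)"
| "gre_over A (GConc E F) = (gre_over A E \<and> gre_over A F)"
| "gre_over A (GStar E) = gre_over A E"
| "gre_over A (GCompl E) = gre_over A E"

text \<open>Semantics; complement is taken in A^*.\<close>
fun gre_lang :: "'a set \<Rightarrow> 'a gre \<Rightarrow> 'a list set" where
  "gre_lang A GEmpty = {}"
| "gre_lang A GEps = {[]}"
| "gre_lang A (GLet a) = {[a]}"
| "gre_lang A (GUnion E F) = gre_lang A E \<union> gre_lang A F"
| "gre_lang A (GConc E F) = {u @ v | u v. u \<in> gre_lang A E \<and> v \<in> gre_lang A F}"
| "gre_lang A (GStar E) = kstar (gre_lang A E)"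
| "gre_lang A (GCompl E) = lists A - gre_lang A E"

fun star_height :: "'a gre \<Rightarrow> nat" where
  "star_height GEmpty = 0"
| "star_height GEps = 0"
| "star_height (GLet a) = 0"
| "star_height (GUnion E F) = max (star_height E) (star_height F)"
| "star_height (GConc E F) = max (star_height E) (star_height F)"
| "star_height (GStar E) = star_height E + 1"
| "star_height (GCompl E) = star_height E"

definition gen_star_height_le :: "'a set \<Rightarrow> 'a list set \<Rightarrow> nat \<Rightarrow> bool" where
  "gen_star_height_le A L k = (\<exists>E. gre_over A E \<and> gre_lang A E = L \<and> star_height E \<le> k)"

end

theory Submission
  imports Defs "HOL-Library.Sublist"
begin

text \<open>
  Write psi x = (i x, g x, l x) for letters x. A nonempty word x1 ... xk is mapped to zero unless
  no letter is mapped to zero and all sandwich entries P (l xj) (i x(j+1)) are defined, and then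
  to (i x1, (sum of the g xj and of those sandwich entries) mod n, l xk). Avoiding finitely many
  factors of length one or two and prescribing the first and last letter are star-free
  conditions, so everything reduces to the residue classes modulo n of the middle component, an
  integer combination of the numbers of occurrences of letters and of two-letter factors.

  Occurrences of a letter a, or of a factor ab with a \<noteq> b, do not overlap. Hence the words in
  which their number is m modulo n form (B^n)* B^m F, where F is the star-free set of words
  avoiding the factor and B = F \<cdot> factor: a language of star height one. Overlapping factors aa
  are eliminated using |w|_a = (\<Sum>b. |w|_ab) + [w ends with a], and residue classes of integer
  combinations are finite Boolean combinations of the residue classes of the summands.
\<close>

definition conc :: "'a list set \<Rightarrow> 'a list set \<Rightarrow> 'a list set" where
  "conc L M = {u @ v | u v. u \<in> L \<and> v \<in> M}"

lemma concI: "u \<in> L \<Longrightarrow> v \<in> M \<Longrightarrow> u @ v \<in> conc L M"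
  unfolding conc_def by blast

lemma concE:
  assumes "w \<in> conc L M"
  obtains u v where "w = u @ v" "u \<in> L" "v \<in> M"
  using assms unfolding conc_def by blast

lemma conc_assoc: "conc (conc L M) N = conc L (conc M N)"
proof (rule set_eqI)
  fix w show "w \<in> conc (conc L M) N \<longleftrightarrow> w \<in> conc L (conc M N)"
    unfolding conc_def by (auto, metis append_assoc, metis append_assoc)
qed

lemma conc_mono: "L \<subseteq> L' \<Longrightarrow> M \<subseteq> M' \<Longrightarrow> conc L M \<subseteq> conc L' M'"
  unfolding conc_def by blast

lemma conc_Nil_left [simp]: "conc {[]} M = M"
  unfolding conc_def by simp

fun conc_pow :: "'a list set \<Rightarrow> nat \<Rightarrow> 'a list set" where
  "conc_pow D 0 = {[]}"
| "conc_pow D (Suc k) = conc D (conc_pow D k)"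

lemma conc_pow_add: "conc_pow D (a + b) = conc (conc_pow D a) (conc_pow D b)"
  by (induction a) (simp_all add: conc_assoc)

lemma conc_pow_mult_subset_kstar: "conc_pow D (q * n) \<subseteq> kstar (conc_pow D n)"
proof (induction q)
  case (Suc q)
  have "conc_pow D (Suc q * n) = conc (conc_pow D n) (conc_pow D (q * n))"
    by (simp add: conc_pow_add)
  with Suc show ?case by (auto elim!: concE intro: kstar_app)
qed (simp add: kstar_nil)

lemma kstar_subset_lists: "w \<in> kstar L \<Longrightarrow> L \<subseteq> lists A \<Longrightarrow> w \<in> lists A"
  by (induction rule: kstar.induct) auto

lemma gre_lang_subset_lists: "gre_over A E \<Longrightarrow> gre_lang A E \<subseteq> lists A"
proof (induction E)
  case (GStar E)
  then show ?case using kstar_subset_lists by (metis gre_lang.simps(6) gre_over.simps(6) subsetI)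
qed (auto dest!: subsetD)

lemma gen_star_height_le_subset_lists: "gen_star_height_le A L k \<Longrightarrow> L \<subseteq> lists A"
  unfolding gen_star_height_le_def using gre_lang_subset_lists by blast

lemma gen_star_height_le_mono: "gen_star_height_le A L k \<Longrightarrow> k \<le> k' \<Longrightarrow> gen_star_height_le A L k'"
  unfolding gen_star_height_le_def using le_trans by blast

lemma gen_star_height_le_empty: "gen_star_height_le A {} k"
  unfolding gen_star_height_le_def by (rule exI[of _ GEmpty]) auto

lemma gen_star_height_le_Nil: "gen_star_height_le A {[]} k"
  unfolding gen_star_height_le_def by (rule exI[of _ GEps]) auto

lemma gen_star_height_le_letter: "a \<in> A \<Longrightarrow> gen_star_height_le A {[a]} k"
  unfolding gen_star_height_le_def by (rule exI[of _ "GLet a"]) auto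

lemma gen_star_height_le_lists: "gen_star_height_le A (lists A) k"
  unfolding gen_star_height_le_def by (rule exI[of _ "GCompl GEmpty"]) auto

lemma gen_star_height_le_union:
  assumes "gen_star_height_le A L k" "gen_star_height_le A M k"
  shows "gen_star_height_le A (L \<union> M) k"
proof -
  obtain E F where "gre_over A E" "gre_lang A E = L" "star_height E \<le> k"
    and "gre_over A F" "gre_lang A F = M" "star_height F \<le> k"
    using assms unfolding gen_star_height_le_def by blast
  then show ?thesis unfolding gen_star_height_le_def by (intro exI[of _ "GUnion E F"]) auto
qed

lemma gen_star_height_le_conc:
  assumes "gen_star_height_le A L k" "gen_star_height_le A M k"
  shows "gen_star_height_le A (conc L M) k"
proof -
  obtain E F where "gre_over A E" "gre_lang A E = L" "star_height E \<le> k"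
    and "gre_over A F" "gre_lang A F = M" "star_height F \<le> k"
    using assms unfolding gen_star_height_le_def by blast
  then show ?thesis unfolding gen_star_height_le_def by (intro exI[of _ "GConc E F"]) (auto simp: conc_def)
qed

lemma gen_star_height_le_compl:
  assumes "gen_star_height_le A L k"
  shows "gen_star_height_le A (lists A - L) k"
proof -
  obtain E where "gre_over A E" "gre_lang A E = L" "star_height E \<le> k"
    using assms unfolding gen_star_height_le_def by blast
  then show ?thesis unfolding gen_star_height_le_def by (intro exI[of _ "GCompl E"]) auto
qed

lemma gen_star_height_le_kstar:
  assumes "gen_star_height_le A L k"
  shows "gen_star_height_le A (kstar L) (Suc k)"
proof -
  obtain E where "gre_over A E" "gre_lang A E = L" "star_height E \<le> k"
    using assms unfolding gen_star_height_le_def by blast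
  then show ?thesis unfolding gen_star_height_le_def by (intro exI[of _ "GStar E"]) auto
qed

lemma gen_star_height_le_inter:
  assumes "gen_star_height_le A L k" "gen_star_height_le A M k"
  shows "gen_star_height_le A (L \<inter> M) k"
proof -
  have "L \<inter> M = lists A - ((lists A - L) \<union> (lists A - M))"
    using assms by (auto dest: gen_star_height_le_subset_lists)
  then show ?thesis
    using assms by (simp add: gen_star_height_le_compl gen_star_height_le_union)
qed

lemma gen_star_height_le_diff:
  assumes "gen_star_height_le A L k" "gen_star_height_le A M k"
  shows "gen_star_height_le A (L - M) k"
proof -
  have "L - M = L \<inter> (lists A - M)"
    using assms by (auto dest: gen_star_height_le_subset_lists)
  then show ?thesis
    using assms by (simp add: gen_star_height_le_compl gen_star_height_le_inter)
qed

lemma gen_star_height_le_UN: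
  "finite S \<Longrightarrow> (\<And>s. s \<in> S \<Longrightarrow> gen_star_height_le A (F s) k) \<Longrightarrow> gen_star_height_le A (\<Union>s\<in>S. F s) k"
  by (induction S rule: finite_induct) (auto intro: gen_star_height_le_empty gen_star_height_le_union)

lemma gen_star_height_le_conc_pow:
  "gen_star_height_le A D k \<Longrightarrow> gen_star_height_le A (conc_pow D m) k"
  by (induction m) (auto intro: gen_star_height_le_Nil gen_star_height_le_conc)

lemma gen_star_height_le_word: "set f \<subseteq> A \<Longrightarrow> gen_star_height_le A {f} k"
proof (induction f)
  case (Cons a f)
  have "{a # f} = conc {[a]} {f}" by (simp add: conc_def)
  then show ?case using Cons by (simp add: gen_star_height_le_conc gen_star_height_le_letter)
qed (rule gen_star_height_le_Nil)

lemma words_with_factor_eq_conc: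
  assumes "set f \<subseteq> A"
  shows "{w \<in> lists A. sublist f w} = conc (conc (lists A) {f}) (lists A)"
proof (intro equalityI subsetI)
  fix w assume "w \<in> {w \<in> lists A. sublist f w}"
  then have "w \<in> lists A" and "sublist f w" by auto
  moreover from \<open>sublist f w\<close> obtain ps ss where w: "w = ps @ f @ ss"
    unfolding sublist_def by blast
  ultimately have "ps \<in> lists A" "ss \<in> lists A" by auto
  then have "(ps @ f) @ ss \<in> conc (conc (lists A) {f}) (lists A)" by (intro concI) auto
  with w show "w \<in> conc (conc (lists A) {f}) (lists A)" by simp
next
  fix w assume "w \<in> conc (conc (lists A) {f}) (lists A)"
  then obtain u ss where u: "w = u @ ss" "u \<in> conc (lists A) {f}" "ss \<in> lists A"
    by (rule concE)
  from u(2) obtain ps where "u = ps @ f" "ps \<in> lists A"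
    by (rule concE) simp
  with u show "w \<in> {w \<in> lists A. sublist f w}" using assms by (auto simp: sublist_def)
qed

lemma gen_star_height_le_factor:
  "set f \<subseteq> A \<Longrightarrow> gen_star_height_le A {w \<in> lists A. sublist f w} k"
  by (simp add: words_with_factor_eq_conc gen_star_height_le_conc gen_star_height_le_lists
      gen_star_height_le_word)

lemma gen_star_height_le_hd:
  assumes "a \<in> A"
  shows "gen_star_height_le A {w \<in> lists A. w \<noteq> [] \<and> hd w = a} k"
proof -
  have "{w \<in> lists A. w \<noteq> [] \<and> hd w = a} = conc {[a]} (lists A)"
  proof (intro equalityI subsetI)
    fix w assume "w \<in> {w \<in> lists A. w \<noteq> [] \<and> hd w = a}"
    then have "[a] @ tl w \<in> conc {[a]} (lists A)" by (intro concI) (auto dest: list.set_sel(2))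
    moreover have "a # tl w = w" using \<open>w \<in> _\<close> by (cases w) auto
    ultimately show "w \<in> conc {[a]} (lists A)" by simp
  qed (use assms in \<open>auto elim!: concE\<close>)
  with assms show ?thesis by (simp add: gen_star_height_le_conc gen_star_height_le_letter gen_star_height_le_lists)
qed

lemma gen_star_height_le_last:
  assumes "a \<in> A"
  shows "gen_star_height_le A {w \<in> lists A. w \<noteq> [] \<and> last w = a} k"
proof -
  have "{w \<in> lists A. w \<noteq> [] \<and> last w = a} = conc (lists A) {[a]}"
  proof (intro equalityI subsetI)
    fix w assume "w \<in> {w \<in> lists A. w \<noteq> [] \<and> last w = a}"
    then have "butlast w @ [a] \<in> conc (lists A) {[a]}" by (intro concI) (auto dest: in_set_butlastD)
    moreover have "butlast w @ [a] = w" using \<open>w \<in> _\<close> append_butlast_last_id by fastforce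
    ultimately show "w \<in> conc (lists A) {[a]}" by simp
  qed (use assms in \<open>auto elim!: concE\<close>)
  with assms show ?thesis by (simp add: gen_star_height_le_conc gen_star_height_le_letter gen_star_height_le_lists)
qed

section \<open>Counting modulo n\<close>

definition residue_classes_sh1 :: "'a set \<Rightarrow> nat \<Rightarrow> ('a list \<Rightarrow> int) \<Rightarrow> bool" where
  "residue_classes_sh1 A n g \<longleftrightarrow> (\<forall>m. gen_star_height_le A {w \<in> lists A. g w mod int n = m} 1)"

lemma residue_classes_sh1I:
  assumes "n \<ge> 1" and "\<And>m. m < n \<Longrightarrow> gen_star_height_le A {w \<in> lists A. g w mod int n = int m} 1"
  shows "residue_classes_sh1 A n g"
  unfolding residue_classes_sh1_def
proof
  fix m :: int
  show "gen_star_height_le A {w \<in> lists A. g w mod int n = m} 1"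
  proof (cases "0 \<le> m \<and> m < int n")
    case True
    then show ?thesis using assms(2)[of "nat m"] by (simp add: nat_less_iff)
  next
    case False
    then have "{w \<in> lists A. g w mod int n = m} = {}"
      using assms(1) by (auto simp: pos_mod_bound)
    then show ?thesis by (metis gen_star_height_le_empty)
  qed
qed

lemma residue_classes_sh1_combine:
  assumes n: "n \<ge> 1" and g: "residue_classes_sh1 A n g" and h: "residue_classes_sh1 A n h"
    and \<phi>: "\<And>x y. \<phi> x y mod int n = \<phi> (x mod int n) (y mod int n) mod int n"
  shows "residue_classes_sh1 A n (\<lambda>w. \<phi> (g w) (h w))"
proof (rule residue_classes_sh1I[OF n])
  fix m :: nat
  let ?R = "{(j, k) \<in> {0..<int n} \<times> {0..<int n}. \<phi> j k mod int n = int m}"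
  have "{w \<in> lists A. \<phi> (g w) (h w) mod int n = int m} =
      (\<Union>(j, k)\<in>?R. {w \<in> lists A. g w mod int n = j} \<inter> {w \<in> lists A. h w mod int n = k})"
  proof (intro equalityI subsetI)
    fix w assume "w \<in> {w \<in> lists A. \<phi> (g w) (h w) mod int n = int m}"
    then have "w \<in> lists A" "(g w mod int n, h w mod int n) \<in> ?R"
      using n \<phi>[of "g w" "h w"] by auto
    then show "w \<in> (\<Union>(j, k)\<in>?R. {w \<in> lists A. g w mod int n = j} \<inter> {w \<in> lists A. h w mod int n = k})"
      by blast
  qed (use \<phi> in auto)
  moreover have "finite ?R"
    by (rule finite_subset[of _ "{0..<int n} \<times> {0..<int n}"]) auto
  ultimately show "gen_star_height_le A {w \<in> lists A. \<phi> (g w) (h w) mod int n = int m} 1"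
    using g h unfolding residue_classes_sh1_def
    by (auto intro!: gen_star_height_le_UN gen_star_height_le_inter)
qed

lemma residue_classes_sh1_cong:
  assumes "\<And>w. w \<in> lists A \<Longrightarrow> g w = h w" and "residue_classes_sh1 A n g"
  shows "residue_classes_sh1 A n h"
proof -
  have "{w \<in> lists A. h w mod int n = m} = {w \<in> lists A. g w mod int n = m}" for m
    by (rule Collect_cong) (metis assms(1))
  with assms(2) show ?thesis unfolding residue_classes_sh1_def by simp
qed

lemma residue_classes_sh1_add:
  "n \<ge> 1 \<Longrightarrow> residue_classes_sh1 A n g \<Longrightarrow> residue_classes_sh1 A n h \<Longrightarrow>
    residue_classes_sh1 A n (\<lambda>w. g w + h w)"
  by (rule residue_classes_sh1_combine) (simp_all add: mod_add_eq)

lemma residue_classes_sh1_diff: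
  "n \<ge> 1 \<Longrightarrow> residue_classes_sh1 A n g \<Longrightarrow> residue_classes_sh1 A n h \<Longrightarrow>
    residue_classes_sh1 A n (\<lambda>w. g w - h w)"
  by (rule residue_classes_sh1_combine) (simp_all add: mod_diff_eq)

lemma residue_classes_sh1_mult_right:
  "n \<ge> 1 \<Longrightarrow> residue_classes_sh1 A n g \<Longrightarrow> residue_classes_sh1 A n (\<lambda>w. g w * a)"
  using residue_classes_sh1_combine[of n A g g "\<lambda>x y. x * a"] by (simp add: mod_mult_left_eq)

lemma residue_classes_sh1_const: "residue_classes_sh1 A n (\<lambda>w. a)"
proof -
  have "{w \<in> lists A. a mod int n = m} = (if a mod int n = m then lists A else {})" for m
    by auto
  then show ?thesis
    unfolding residue_classes_sh1_def by (simp add: gen_star_height_le_lists gen_star_height_le_empty)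
qed

lemma residue_classes_sh1_sum:
  assumes "n \<ge> 1" and "finite S" and "\<And>s. s \<in> S \<Longrightarrow> residue_classes_sh1 A n (g s)"
  shows "residue_classes_sh1 A n (\<lambda>w. \<Sum>s\<in>S. g s w)"
  using assms(2,3)
  by (induction S rule: finite_induct)
    (simp_all add: residue_classes_sh1_const residue_classes_sh1_add[OF assms(1)])

lemma residue_classes_sh1_of_bool:
  assumes "gen_star_height_le A L 1"
  shows "residue_classes_sh1 A n (\<lambda>w. of_bool (w \<in> L))"
proof -
  have "{w \<in> lists A. of_bool (w \<in> L) mod int n = m} =
      (if 1 mod int n = m then L else {}) \<union> (if 0 mod int n = m then lists A - L else {})" for m
    using gen_star_height_le_subset_lists[OF assms] by auto
  then show ?thesis unfolding residue_classes_sh1_def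
    using assms by (simp add: gen_star_height_le_union gen_star_height_le_compl gen_star_height_le_empty)
qed

lemma sublist_first_occurrence:
  assumes "f \<noteq> []" and "sublist f w"
  obtains x y where "w = x @ f @ y" and "\<not> sublist f x"
proof -
  obtain x where x: "\<exists>y. w = x @ f @ y" and least: "\<And>x'. \<exists>y. w = x' @ f @ y \<Longrightarrow> length x \<le> length x'"
    using ex_has_least_nat[of "\<lambda>x. \<exists>y. w = x @ f @ y" _ length] assms(2)
    unfolding sublist_def by metis
  then obtain y where w: "w = x @ f @ y" by blast
  have "\<not> sublist f x"
  proof
    assume "sublist f x"
    then obtain p s where "x = p @ f @ s" unfolding sublist_def by blast
    with w have "w = p @ f @ (s @ f @ y)" by simp
    then have "length x \<le> length p" using least by blast
    with \<open>x = p @ f @ s\<close> assms(1) show False by simp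
  qed
  with w show thesis using that by blast
qed

text \<open>
  \<open>c\<close> counts the occurrences of the factor \<open>f\<close>; after a word in \<open>G\<close> no occurrence can
  straddle the cut, so \<open>c\<close> is additive there.
\<close>

locale factor_count =
  fixes A :: "'a set" and f :: "'a list" and c :: "'a list \<Rightarrow> nat" and G :: "'a list set"
  assumes factor_in_lists: "set f \<subseteq> A"
    and Nil_in_G: "[] \<in> G"
    and append_in_G: "u \<in> G \<Longrightarrow> v \<in> G \<Longrightarrow> u @ v \<in> G"
    and count_append: "u \<in> G \<Longrightarrow> c (u @ v) = c u + c v"
    and count_eq_0_iff: "c w = 0 \<longleftrightarrow> \<not> sublist f w"
    and count_first_block: "\<not> sublist f x \<Longrightarrow> x @ f \<in> G \<and> c (x @ f) = 1"
begin

definition free :: "'a list set" where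
  "free = {w \<in> lists A. \<not> sublist f w}"

definition block :: "'a list set" where
  "block = conc free {f}"

lemma count_Nil: "c [] = 0"
  using count_append[OF Nil_in_G, of "[]"] by simp

lemma factor_not_Nil: "f \<noteq> []"
  using count_eq_0_iff[of "[]"] count_Nil by auto

lemma conc_pow_blockD: "w \<in> conc_pow block k \<Longrightarrow> w \<in> G \<and> c w = k \<and> w \<in> lists A"
proof (induction k arbitrary: w)
  case (Suc k)
  then obtain x v where w: "w = (x @ f) @ v" and x: "x \<in> free" and v: "v \<in> conc_pow block k"
    by (auto simp: block_def elim!: concE)
  have xf: "x @ f \<in> G" "c (x @ f) = 1"
    using x count_first_block by (auto simp: free_def)
  have "w \<in> G" unfolding w using xf Suc.IH[OF v] by (blast intro: append_in_G)
  moreover have "c w = Suc k" unfolding w using xf Suc.IH[OF v] count_append[OF xf(1)] by presburger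
  moreover have "w \<in> lists A" using w x Suc.IH[OF v] factor_in_lists by (auto simp: free_def)
  ultimately show ?case by blast
qed (simp add: Nil_in_G count_Nil)

lemma kstar_conc_pow_blockD: "w \<in> kstar (conc_pow block n) \<Longrightarrow> w \<in> G \<and> c w mod n = 0 \<and> w \<in> lists A"
proof (induction rule: kstar.induct)
  case (kstar_app u v)
  then show ?case using conc_pow_blockD[of u n] by (auto intro: append_in_G simp: count_append)
qed (simp add: Nil_in_G count_Nil)

lemma count_eq_imp_mem_conc_pow_block: "w \<in> lists A \<Longrightarrow> c w = k \<Longrightarrow> w \<in> conc (conc_pow block k) free"
proof (induction k arbitrary: w)
  case 0
  then have "[] @ w \<in> conc (conc_pow block 0) free"
    by (intro concI) (simp_all add: free_def count_eq_0_iff)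
  then show ?case by simp
next
  case (Suc k)
  then have "sublist f w" using count_eq_0_iff by (metis Zero_not_Suc)
  then obtain x y where w: "w = x @ f @ y" and x: "\<not> sublist f x"
    using factor_not_Nil by (blast elim: sublist_first_occurrence)
  have "x @ f \<in> block"
    using x w Suc.prems(1) by (auto simp: block_def free_def intro!: concI)
  moreover have "c y = k"
    using count_first_block[OF x] count_append[of "x @ f" y] w Suc.prems(2) by simp
  then have "y \<in> conc (conc_pow block k) free" using Suc w by simp
  then obtain y1 y2 where "y = y1 @ y2" "y1 \<in> conc_pow block k" "y2 \<in> free"
    by (rule concE)
  ultimately have "(x @ f) @ y1 \<in> conc_pow block (Suc k)"
    by (simp only: conc_pow.simps concI)
  then have "((x @ f) @ y1) @ y2 \<in> conc (conc_pow block (Suc k)) free"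
    using \<open>y2 \<in> free\<close> by (rule concI)
  with w \<open>y = y1 @ y2\<close> show ?case by simp
qed

lemma residue_class_eq_conc:
  assumes "m < n"
  shows "{w \<in> lists A. c w mod n = m} = conc (kstar (conc_pow block n)) (conc (conc_pow block m) free)"
proof (intro equalityI subsetI)
  fix w assume "w \<in> {w \<in> lists A. c w mod n = m}"
  then have "w \<in> lists A" and "c w = c w div n * n + m" by auto
  then have "w \<in> conc (conc_pow block (c w div n * n + m)) free"
    by (rule count_eq_imp_mem_conc_pow_block)
  then have "w \<in> conc (conc_pow block (c w div n * n)) (conc (conc_pow block m) free)"
    by (simp add: conc_pow_add conc_assoc)
  then show "w \<in> conc (kstar (conc_pow block n)) (conc (conc_pow block m) free)"
    using conc_mono[OF conc_pow_mult_subset_kstar order_refl] by blast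
next
  fix w assume "w \<in> conc (kstar (conc_pow block n)) (conc (conc_pow block m) free)"
  then obtain u r where w: "w = u @ r" and u: "u \<in> kstar (conc_pow block n)"
    and "r \<in> conc (conc_pow block m) free"
    by (rule concE)
  then obtain v e where r: "r = v @ e" and v: "v \<in> conc_pow block m" and e: "e \<in> free"
    by (elim concE)
  have "c w = c u + (c v + c e)"
    unfolding w r using kstar_conc_pow_blockD[OF u] conc_pow_blockD[OF v] by (simp add: count_append)
  moreover have "c u mod n = 0" "c v = m" "c e = 0"
    using e kstar_conc_pow_blockD[OF u] conc_pow_blockD[OF v] by (simp_all add: free_def count_eq_0_iff)
  ultimately have "c w mod n = m"
    using assms by (metis add.right_neutral add_0 mod_add_left_eq mod_less)
  then show "w \<in> {w \<in> lists A. c w mod n = m}"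
    using w r e kstar_conc_pow_blockD[OF u] conc_pow_blockD[OF v] by (simp add: free_def)
qed

lemma residue_classes_sh1_count:
  assumes "n \<ge> 1"
  shows "residue_classes_sh1 A n (\<lambda>w. int (c w))"
proof (rule residue_classes_sh1I[OF assms])
  fix m assume "m < n"
  have "free = lists A - {w \<in> lists A. sublist f w}"
    by (auto simp: free_def)
  then have "gen_star_height_le A free 0"
    by (simp add: gen_star_height_le_compl gen_star_height_le_factor factor_in_lists)
  then have "gen_star_height_le A block 0"
    unfolding block_def by (intro gen_star_height_le_conc gen_star_height_le_word factor_in_lists)
  then have "gen_star_height_le A (kstar (conc_pow block n)) 1"
    and "gen_star_height_le A (conc (conc_pow block m) free) 0"
    using \<open>gen_star_height_le A free 0\<close> gen_star_height_le_kstar[of A "conc_pow block n" 0]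
    by (auto intro: gen_star_height_le_conc gen_star_height_le_conc_pow)
  then have "gen_star_height_le A (conc (kstar (conc_pow block n)) (conc (conc_pow block m) free)) 1"
    by (blast intro: gen_star_height_le_conc gen_star_height_le_mono)
  moreover have "int (c w) mod int n = int m \<longleftrightarrow> c w mod n = m" for w
    by (metis of_nat_eq_iff of_nat_mod)
  ultimately show "gen_star_height_le A {w \<in> lists A. int (c w) mod int n = int m} 1"
    using residue_class_eq_conc[OF \<open>m < n\<close>] by simp
qed

end

section \<open>Letters and adjacent pairs\<close>

lemma sublist_singleton_iff: "sublist [a] w \<longleftrightarrow> a \<in> set w"
  by (auto simp: sublist_def in_set_conv_decomp)

lemma residue_classes_sh1_count_list:
  assumes "a \<in> A" and "n \<ge> 1"
  shows "residue_classes_sh1 A n (\<lambda>w. int (count_list w a))"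
proof -
  interpret factor_count A "[a]" "\<lambda>w. count_list w a" UNIV
    using assms(1) by unfold_locales (auto simp: count_list_0_iff sublist_singleton_iff)
  show ?thesis using assms(2) by (rule residue_classes_sh1_count)
qed

definition adjacent_pairs :: "'a list \<Rightarrow> ('a \<times> 'a) list" where
  "adjacent_pairs w = zip w (tl w)"

lemma adjacent_pairs_simps [simp]:
  "adjacent_pairs [] = []"
  "adjacent_pairs [x] = []"
  "adjacent_pairs (x # y # ys) = (x, y) # adjacent_pairs (y # ys)"
  by (simp_all add: adjacent_pairs_def)

lemma adjacent_pairs_append:
  "adjacent_pairs (u @ v) =
    adjacent_pairs u @ (if u \<noteq> [] \<and> v \<noteq> [] then [(last u, hd v)] else []) @ adjacent_pairs v"
proof (induction u rule: induct_list012)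
  case (3 x y u)
  then show ?case by simp
qed (cases v; simp)+

lemma pair_in_adjacent_pairs_iff: "(a, b) \<in> set (adjacent_pairs w) \<longleftrightarrow> sublist [a, b] w"
proof (induction w rule: induct_list012)
  case (3 x y w)
  then show ?case by (auto simp: sublist_Cons_right)
qed (auto simp: sublist_Cons_right)

lemma adjacent_pairs_subset: "set (adjacent_pairs w) \<subseteq> set w \<times> set w"
  by (cases w) (auto simp: adjacent_pairs_def elim!: in_set_zipE)

lemma residue_classes_sh1_count_adjacent_pair_offdiag:
  assumes "a \<in> A" "b \<in> A" "a \<noteq> b" and "n \<ge> 1"
  shows "residue_classes_sh1 A n (\<lambda>w. int (count_list (adjacent_pairs w) (a, b)))"
proof -
  let ?c = "\<lambda>w. count_list (adjacent_pairs w) (a, b)"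
  interpret factor_count A "[a, b]" ?c "{u. u = [] \<or> last u \<noteq> a}"
  proof
    fix u v :: "'a list"
    assume "u \<in> {u. u = [] \<or> last u \<noteq> a}" "v \<in> {u. u = [] \<or> last u \<noteq> a}"
    then show "u @ v \<in> {u. u = [] \<or> last u \<noteq> a}" by (cases "v = []") auto
  next
    fix u v :: "'a list"
    assume "u \<in> {u. u = [] \<or> last u \<noteq> a}"
    then show "?c (u @ v) = ?c u + ?c v" by (auto simp: adjacent_pairs_append)
  next
    fix x :: "'a list"
    assume "\<not> sublist [a, b] x"
    then show "x @ [a, b] \<in> {u. u = [] \<or> last u \<noteq> a} \<and> ?c (x @ [a, b]) = 1"
      using assms(3) by (simp add: adjacent_pairs_append count_list_0_iff pair_in_adjacent_pairs_iff)
  qed (use assms(1-3) in \<open>auto simp: count_list_0_iff pair_in_adjacent_pairs_iff\<close>)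
  show ?thesis using assms(4) by (rule residue_classes_sh1_count)
qed

lemma count_list_map_fst:
  assumes "finite B" and "snd ` set xs \<subseteq> B"
  shows "count_list (map fst xs) a = (\<Sum>b\<in>B. count_list xs (a, b))"
  using assms(2)
proof (induction xs)
  case (Cons p xs)
  obtain x y where p: "p = (x, y)" by fastforce
  have "(\<Sum>b\<in>B. count_list (p # xs) (a, b))
      = (\<Sum>b\<in>B. (if b = y then of_bool (x = a) else 0) + count_list xs (a, b))"
    by (intro sum.cong) (auto simp: p)
  also have "\<dots> = of_bool (x = a) + (\<Sum>b\<in>B. count_list xs (a, b))"
    using Cons.prems assms(1) by (simp add: sum.distrib p)
  finally show ?case using Cons by (simp add: p)
qed simp

lemma count_list_eq_sum_adjacent_pairs:
  assumes "finite B" and "set w \<subseteq> B"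
  shows "count_list w a = (\<Sum>b\<in>B. count_list (adjacent_pairs w) (a, b)) + of_bool (w \<noteq> [] \<and> last w = a)"
proof -
  have "map fst (adjacent_pairs w) = butlast w"
    by (simp add: adjacent_pairs_def butlast_conv_take map_fst_zip_take)
  moreover have "snd ` set (adjacent_pairs w) \<subseteq> B"
    using assms(2) by (cases w) (auto simp: adjacent_pairs_def dest!: set_zip_rightD)
  moreover have "count_list w a = count_list (butlast w) a + of_bool (w \<noteq> [] \<and> last w = a)"
    by (cases w rule: rev_cases) simp_all
  ultimately show ?thesis using count_list_map_fst[OF assms(1)] by metis
qed

text \<open>Occurrences of \<open>aa\<close> overlap; every \<open>a\<close> is either followed by some letter or last.\<close>

lemma residue_classes_sh1_count_adjacent_pair_diag:
  assumes "finite A" and "a \<in> A" and "n \<ge> 1"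
  shows "residue_classes_sh1 A n (\<lambda>w. int (count_list (adjacent_pairs w) (a, a)))"
proof (rule residue_classes_sh1_cong)
  show "residue_classes_sh1 A n (\<lambda>w. int (count_list w a)
      - (\<Sum>b\<in>A - {a}. int (count_list (adjacent_pairs w) (a, b))) - of_bool (w \<in> {w \<in> lists A. w \<noteq> [] \<and> last w = a}))"
    using assms
    by (intro residue_classes_sh1_diff residue_classes_sh1_count_list residue_classes_sh1_sum
        residue_classes_sh1_count_adjacent_pair_offdiag residue_classes_sh1_of_bool gen_star_height_le_last) auto
next
  fix w assume "w \<in> lists A"
  then have "int (count_list w a) = (\<Sum>b\<in>A. int (count_list (adjacent_pairs w) (a, b)))
      + of_bool (w \<noteq> [] \<and> last w = a)"
    using count_list_eq_sum_adjacent_pairs[OF assms(1)] by (fastforce simp flip: of_nat_sum)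
  also have "(\<Sum>b\<in>A. int (count_list (adjacent_pairs w) (a, b)))
      = int (count_list (adjacent_pairs w) (a, a)) + (\<Sum>b\<in>A - {a}. int (count_list (adjacent_pairs w) (a, b)))"
    using assms(1,2) by (rule sum.remove)
  finally show "int (count_list w a) - (\<Sum>b\<in>A - {a}. int (count_list (adjacent_pairs w) (a, b)))
      - of_bool (w \<in> {w \<in> lists A. w \<noteq> [] \<and> last w = a}) = int (count_list (adjacent_pairs w) (a, a))"
    using \<open>w \<in> lists A\<close> by simp
qed

lemma residue_classes_sh1_count_adjacent_pairs:
  assumes "finite A" and "a \<in> A" "b \<in> A" and "n \<ge> 1"
  shows "residue_classes_sh1 A n (\<lambda>w. int (count_list (adjacent_pairs w) (a, b)))"
  using assms residue_classes_sh1_count_adjacent_pair_offdiag residue_classes_sh1_count_adjacent_pair_diag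
  by (cases "a = b") auto

lemma residue_classes_sh1_letter_and_pair_weights:
  fixes f :: "'a \<Rightarrow> nat" and q :: "'a \<Rightarrow> 'a \<Rightarrow> nat"
  assumes "finite A" and "n \<ge> 1"
  shows "residue_classes_sh1 A n
    (\<lambda>w. int (sum_list (map f w) + sum_list (map (case_prod q) (adjacent_pairs w))))"
proof (rule residue_classes_sh1_cong)
  show "residue_classes_sh1 A n (\<lambda>w. (\<Sum>a\<in>A. int (count_list w a) * int (f a))
      + (\<Sum>p\<in>A \<times> A. int (count_list (adjacent_pairs w) p) * int (case_prod q p)))"
    using assms
    by (intro residue_classes_sh1_add residue_classes_sh1_sum residue_classes_sh1_mult_right
        residue_classes_sh1_count_list)
      (auto intro: residue_classes_sh1_count_adjacent_pairs)
next
  fix w assume w: "w \<in> lists A"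
  then have "set (adjacent_pairs w) \<subseteq> A \<times> A"
    using adjacent_pairs_subset by fastforce
  then have "sum_list (map (case_prod q) (adjacent_pairs w))
      = (\<Sum>p\<in>A \<times> A. count_list (adjacent_pairs w) p * case_prod q p)"
    using assms(1) by (intro sum_list_map_eq_sum_count2) auto
  moreover have "sum_list (map f w) = (\<Sum>a\<in>A. count_list w a * f a)"
    using w assms(1) by (intro sum_list_map_eq_sum_count2) auto
  ultimately show "(\<Sum>a\<in>A. int (count_list w a) * int (f a))
      + (\<Sum>p\<in>A \<times> A. int (count_list (adjacent_pairs w) p) * int (case_prod q p))
      = int (sum_list (map f w) + sum_list (map (case_prod q) (adjacent_pairs w)))"
    by (simp add: of_nat_sum)
qed

section \<open>Morphisms into the Rees zero-matrix semigroup\<close>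

text \<open>The letter data below are junk when \<open>\<psi> [x] = None\<close>; they only matter for nonzero words.\<close>

definition letter_row :: "('a list \<Rightarrow> ('i, 'l) rees0) \<Rightarrow> 'a \<Rightarrow> 'i" where
  "letter_row \<psi> x = fst (the (\<psi> [x]))"

definition letter_entry :: "('a list \<Rightarrow> ('i, 'l) rees0) \<Rightarrow> 'a \<Rightarrow> nat" where
  "letter_entry \<psi> x = fst (snd (the (\<psi> [x])))"

definition letter_col :: "('a list \<Rightarrow> ('i, 'l) rees0) \<Rightarrow> 'a \<Rightarrow> 'l" where
  "letter_col \<psi> x = snd (snd (the (\<psi> [x])))"

definition link ::
    "('a list \<Rightarrow> ('i, 'l) rees0) \<Rightarrow> ('l \<Rightarrow> 'i \<Rightarrow> nat option) \<Rightarrow> 'a \<Rightarrow> 'a \<Rightarrow> nat option" where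
  "link \<psi> P x y = P (letter_col \<psi> x) (letter_row \<psi> y)"

definition nonzero_word ::
    "('a list \<Rightarrow> ('i, 'l) rees0) \<Rightarrow> ('l \<Rightarrow> 'i \<Rightarrow> nat option) \<Rightarrow> 'a list \<Rightarrow> bool" where
  "nonzero_word \<psi> P w \<longleftrightarrow> w \<noteq> [] \<and> (\<forall>x\<in>set w. \<psi> [x] \<noteq> None)
     \<and> (\<forall>(x, y)\<in>set (adjacent_pairs w). link \<psi> P x y \<noteq> None)"

definition weight ::
    "('a list \<Rightarrow> ('i, 'l) rees0) \<Rightarrow> ('l \<Rightarrow> 'i \<Rightarrow> nat option) \<Rightarrow> 'a list \<Rightarrow> nat" where
  "weight \<psi> P w = sum_list (map (letter_entry \<psi>) w)
     + sum_list (map (\<lambda>(x, y). the (link \<psi> P x y)) (adjacent_pairs w))"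

definition word_value ::
    "('a list \<Rightarrow> ('i, 'l) rees0) \<Rightarrow> ('l \<Rightarrow> 'i \<Rightarrow> nat option) \<Rightarrow> nat \<Rightarrow> 'a list \<Rightarrow> ('i, 'l) rees0" where
  "word_value \<psi> P n w = (if nonzero_word \<psi> P w
    then Some (letter_row \<psi> (hd w), weight \<psi> P w mod n, letter_col \<psi> (last w)) else None)"

lemma nonzero_word_Cons_Cons:
  "nonzero_word \<psi> P (x # y # ys) \<longleftrightarrow>
    \<psi> [x] \<noteq> None \<and> link \<psi> P x y \<noteq> None \<and> nonzero_word \<psi> P (y # ys)"
  by (auto simp: nonzero_word_def)

lemma weight_Cons_Cons:
  "weight \<psi> P (x # y # ys) = letter_entry \<psi> x + the (link \<psi> P x y) + weight \<psi> P (y # ys)"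
  by (simp add: weight_def)

lemma rees0_morphism_value:
  assumes carrier: "\<And>w. w \<in> plus_words A \<Longrightarrow> \<psi> w \<in> rees0_carrier n I \<Lambda>"
    and hom: "\<And>u v. u \<in> plus_words A \<Longrightarrow> v \<in> plus_words A \<Longrightarrow>
      \<psi> (u @ v) = rees0_mult n P (\<psi> u) (\<psi> v)"
    and "w \<in> plus_words A"
  shows "\<psi> w = word_value \<psi> P n w"
  using assms(3)
proof (induction w)
  case (Cons x w)
  have x: "[x] \<in> plus_words A" and w: "w \<in> lists A"
    using Cons.prems by (auto simp: plus_words_def)
  have letter: "\<psi> [x] = None \<or>
      \<psi> [x] = Some (letter_row \<psi> x, letter_entry \<psi> x, letter_col \<psi> x) \<and> letter_entry \<psi> x < n"
    using carrier[OF x]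
    by (auto simp: rees0_carrier_def letter_row_def letter_entry_def letter_col_def)
  show ?case
  proof (cases w)
    case Nil
    with letter show ?thesis by (auto simp: word_value_def nonzero_word_def weight_def)
  next
    case (Cons y ys)
    with w have "w \<in> plus_words A" by (simp add: plus_words_def)
    then have "\<psi> (x # w) = rees0_mult n P (\<psi> [x]) (word_value \<psi> P n w)"
      using hom[OF x] Cons.IH by simp
    show ?thesis
    proof (cases "\<psi> [x] = None \<or> \<not> nonzero_word \<psi> P w \<or> link \<psi> P x y = None")
      case True
      with letter \<open>\<psi> (x # w) = _\<close> Cons show ?thesis
        by (auto simp: word_value_def rees0_mult_def nonzero_word_Cons_Cons link_def)
    next
      case False
      then obtain p where "link \<psi> P x y = Some p" by blast
      with False letter \<open>\<psi> (x # w) = _\<close> Cons show ?thesis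
        by (auto simp: word_value_def rees0_mult_def nonzero_word_Cons_Cons weight_Cons_Cons link_def
            mod_add_right_eq)
    qed
  qed
qed (simp add: plus_words_def)

lemma nonzero_words_eq:
  "{w \<in> lists A. nonzero_word \<psi> P w} = (lists A - {[]})
    - (\<Union>x\<in>{x \<in> A. \<psi> [x] = None}. {w \<in> lists A. sublist [x] w})
    - (\<Union>(x, y)\<in>{(x, y) \<in> A \<times> A. link \<psi> P x y = None}. {w \<in> lists A. sublist [x, y] w})"
proof (intro set_eqI)
  fix w
  have pairs: "(\<forall>(x, y)\<in>set (adjacent_pairs w). link \<psi> P x y \<noteq> None) \<longleftrightarrow>
      w \<notin> (\<Union>(x, y)\<in>{(x, y) \<in> A \<times> A. link \<psi> P x y = None}. {w \<in> lists A. sublist [x, y] w})"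
    if "w \<in> lists A"
    using that adjacent_pairs_subset[of w] by (fastforce simp flip: pair_in_adjacent_pairs_iff)
  have letters: "(\<forall>x\<in>set w. \<psi> [x] \<noteq> None) \<longleftrightarrow>
      w \<notin> (\<Union>x\<in>{x \<in> A. \<psi> [x] = None}. {w \<in> lists A. sublist [x] w})"
    if "w \<in> lists A"
    using that by (auto simp: sublist_singleton_iff)
  show "w \<in> {w \<in> lists A. nonzero_word \<psi> P w} \<longleftrightarrow> w \<in> (lists A - {[]})
    - (\<Union>x\<in>{x \<in> A. \<psi> [x] = None}. {w \<in> lists A. sublist [x] w})
    - (\<Union>(x, y)\<in>{(x, y) \<in> A \<times> A. link \<psi> P x y = None}. {w \<in> lists A. sublist [x, y] w})"
    using letters pairs by (cases "w \<in> lists A") (simp_all add: nonzero_word_def)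
qed

lemma gen_star_height_le_nonzero_words:
  assumes "finite A"
  shows "gen_star_height_le A {w \<in> lists A. nonzero_word \<psi> P w} k"
proof -
  have "finite {(x, y) \<in> A \<times> A. link \<psi> P x y = None}"
    by (rule finite_subset[of _ "A \<times> A"]) (use assms in auto)
  then show ?thesis
    unfolding nonzero_words_eq using assms
    by (intro gen_star_height_le_diff gen_star_height_le_lists gen_star_height_le_Nil
        gen_star_height_le_UN) (auto intro: gen_star_height_le_factor)
qed

lemma word_value_preimage_eq:
  assumes n: "n \<ge> 1"
  shows "{w \<in> plus_words A. word_value \<psi> P n w \<in> X} =
    (if None \<in> X then plus_words A - {w \<in> lists A. nonzero_word \<psi> P w} else {})
    \<union> (\<Union>(x, y, r)\<in>{(x, y, r) \<in> A \<times> A \<times> {..<n}. Some (letter_row \<psi> x, r, letter_col \<psi> y) \<in> X}.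
        {w \<in> lists A. nonzero_word \<psi> P w} \<inter> {w \<in> lists A. w \<noteq> [] \<and> hd w = x}
        \<inter> {w \<in> lists A. w \<noteq> [] \<and> last w = y} \<inter> {w \<in> lists A. int (weight \<psi> P w) mod int n = int r})"
  (is "?L = ?R")
proof (intro equalityI subsetI)
  fix w assume "w \<in> ?L"
  then have w: "w \<in> lists A" "w \<noteq> []" and "word_value \<psi> P n w \<in> X"
    by (auto simp: plus_words_def)
  show "w \<in> ?R"
  proof (cases "nonzero_word \<psi> P w")
    case True
    have t: "(hd w, last w, weight \<psi> P w mod n) \<in>
        {(x, y, r) \<in> A \<times> A \<times> {..<n}. Some (letter_row \<psi> x, r, letter_col \<psi> y) \<in> X}"
      using True w n \<open>word_value \<psi> P n w \<in> X\<close> by (auto simp: word_value_def)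
    show ?thesis
      by (intro UnI2 UN_I[OF t]) (use True w in \<open>auto simp: zmod_int\<close>)
  next
    case False
    with w \<open>word_value \<psi> P n w \<in> X\<close> show ?thesis by (auto simp: word_value_def plus_words_def)
  qed
next
  fix w assume "w \<in> ?R"
  then show "w \<in> ?L"
  proof (cases "w \<in> plus_words A \<and> \<not> nonzero_word \<psi> P w")
    case True
    with \<open>w \<in> ?R\<close> show ?thesis by (auto simp: word_value_def split: if_splits)
  next
    case False
    with \<open>w \<in> ?R\<close> obtain x y r where "r < n" "Some (letter_row \<psi> x, r, letter_col \<psi> y) \<in> X"
      and w: "w \<in> lists A" "nonzero_word \<psi> P w" "hd w = x" "last w = y" "weight \<psi> P w mod n = r"
      by (auto split: if_splits simp: plus_words_def simp flip: zmod_int)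
    moreover have "w \<in> plus_words A" using w by (auto simp: plus_words_def nonzero_word_def)
    ultimately show ?thesis by (auto simp: word_value_def)
  qed
qed

lemma gen_star_height_le_word_value_preimage:
  assumes "n \<ge> 1" and "finite A"
  shows "gen_star_height_le A {w \<in> plus_words A. word_value \<psi> P n w \<in> X} 1"
proof -
  have nonzero: "gen_star_height_le A {w \<in> lists A. nonzero_word \<psi> P w} k" for k
    using assms(2) by (rule gen_star_height_le_nonzero_words)
  have "gen_star_height_le A (plus_words A) 1"
    unfolding plus_words_def by (intro gen_star_height_le_diff gen_star_height_le_lists gen_star_height_le_Nil)
  moreover have "residue_classes_sh1 A n (\<lambda>w. int (weight \<psi> P w))"
    unfolding weight_def using assms(2,1)
    by (rule residue_classes_sh1_letter_and_pair_weights[where q = "\<lambda>x y. the (link \<psi> P x y)"])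
  moreover have "finite (A \<times> A \<times> {..<n})" using assms(2) by simp
  ultimately show ?thesis
    unfolding word_value_preimage_eq[OF assms(1)] using nonzero
    by (intro gen_star_height_le_union gen_star_height_le_UN)
      (auto simp: residue_classes_sh1_def gen_star_height_le_empty
        intro!: gen_star_height_le_diff gen_star_height_le_inter gen_star_height_le_hd gen_star_height_le_last
        elim: finite_subset[rotated])
qed

theorem theorem3p3:
  fixes n :: nat and I :: "'i set" and \<Lambda> :: "'l set"
    and P :: "'l \<Rightarrow> 'i \<Rightarrow> nat option"
    and A :: "'a set" and L :: "'a list set"
  assumes "n \<ge> 1" and "I \<noteq> {}" and "\<Lambda> \<noteq> {}"
    and "valid_sandwich n I \<Lambda> P"
    and "finite A"
    and "L \<subseteq> plus_words A"
    and "recognised_by A (rees0_carrier n I \<Lambda>) (rees0_mult n P) L"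
  shows "gen_star_height_le A L 1"
proof -
  obtain \<psi> :: "'a list \<Rightarrow> ('i, 'l) rees0" and X
    where "\<forall>w\<in>plus_words A. \<psi> w \<in> rees0_carrier n I \<Lambda>"
      and "\<forall>u\<in>plus_words A. \<forall>v\<in>plus_words A. \<psi> (u @ v) = rees0_mult n P (\<psi> u) (\<psi> v)"
      and L: "L = {w \<in> plus_words A. \<psi> w \<in> X}"
    using assms(7) unfolding recognised_by_def by blast
  then have "\<And>w. w \<in> plus_words A \<Longrightarrow> \<psi> w = word_value \<psi> P n w"
    by (intro rees0_morphism_value) auto
  with L have "L = {w \<in> plus_words A. word_value \<psi> P n w \<in> X}"
    by auto
  with gen_star_height_le_word_value_preimage[OF assms(1,5)] show ?thesis by simp
qed

end
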